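(* Let $\Delta \subset \mathbb{R}^2$ be a measurable set and let $f \in M^1$. Then for every $0<R<\infty$, \[ \Vert P_{\Delta}(V_{\varphi}f)\Vert_{1} \leq \frac{\rho(\Delta,R)}{1-e^{-\pi/R^{2}}}\cdot \Vert V_{\varphi}f\Vert_{1}. \]
   Context: Let $\varphi(t)=2^{1/4}e^{-\pi t^2}$ be the normalized Gaussian. The short-time Fourier transform (STFT) is $V_\varphi f(x,\omega)=\int_{\mathbb{R}} f(t)\overline{\varphi(t-x)}e^{-2\pi i \omega t}\,dt$, $(x,\omega)\in\mathbb{R}^2$ (extended to tempered distributions $f\in\mathcal{S}'(\mathbb{R})$). The modulation space $M^1$ is $\{f\in\mathcal{S}'(\mathbb{R}): \Vert V_\varphi f\Vert_{1}<\infty\}$, where $\Vert\cdot\Vert_1$ is the $L^1(\mathbb{R}^2)$ norm. For $A\subset\mathbb{R}^2$, $P_A$ denotes multiplication by the indicator function $\chi_A$. The planar maximum Nyquist density is $\rho(\Delta,R):=\sup_{z\in\mathbb{R}^2}|\Delta\cap(z+D_{1/R})|$, where $D_{1/R}\subset\mathbb{R}^2$ is the disc of radius $1/R$ centered at the origin and $|\cdot|$ is Lebesgue measure. *)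

theory Defs
  imports "HOL-Analysis.Analysis"
begin

definition gauss :: "real \<Rightarrow> real" where
  "gauss t = 2 powr (1/4) * exp (- pi * t\<^sup>2)"

definition stft :: "(real \<Rightarrow> complex) \<Rightarrow> real \<times> real \<Rightarrow> complex" where
  "stft f z = (LINT t|lborel. f t * cnj (complex_of_real (gauss (t - fst z)))
                 * exp (- 2 * pi * \<i> * complex_of_real (snd z * t)))"

definition L1norm :: "(real \<times> real \<Rightarrow> complex) \<Rightarrow> real" where
  "L1norm F = (LINT z|lebesgue. norm (F z))"

text \<open>Feichtinger algebra M^1: (as every element of M^1 is an integrable function)
  integrable f with integrable STFT.\<close>
definition M1 :: "(real \<Rightarrow> complex) set" where
  "M1 = {f. integrable lborel f \<and> integrable lebesgue (stft f)}"

definition proj :: "(real \<times> real) set \<Rightarrow> (real \<times> real \<Rightarrow> complex) \<Rightarrow> real \<times> real \<Rightarrow> complex" where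
  "proj A F z = indicator A z * F z"

definition nyquist_density :: "(real \<times> real) set \<Rightarrow> real \<Rightarrow> real" where
  "nyquist_density \<Delta> R = (SUP z. measure lebesgue (\<Delta> \<inter> ball z (1 / R)))"

end

theory Submission
  imports Defs "HOL-Complex_Analysis.Complex_Analysis"
begin

(* For z = (x, omega), completing the square in the STFT gives
   |V f (z + w)| = exp (-pi |w|^2 / 2) * |B (w1 - i w2)| with B an entire function (a Bargmann
   transform), so w |-> exp (pi |w|^2 / 2) |V f (z + w)| is subharmonic.  Averaging it over the disc
   of radius r = 1/R against the radial weight exp (-pi |w|^2 / 2), which cancels the Gaussian factor,
   yields 2 (1 - exp (-pi r^2 / 2)) |V f (z)| <= integral of |V f| over B(z, r), and
   2 (1 - exp (-pi r^2 / 2)) >= 1 - exp (-pi / R^2).  Integrating over z in Delta and exchanging the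
   integrals bounds the left-hand side by the integral of |V f (w)| |Delta /\ B(w, r)| dw, which is
   at most rho(Delta, R) ||V f||_1.  The disc average uses rotation invariance of Lebesgue measure,
   obtained from the decomposition of a rotation into three shears. *)

section \<open>Rotation invariance of planar Lebesgue measure\<close>

definition rot :: "real \<Rightarrow> real \<times> real \<Rightarrow> real \<times> real" where
  "rot th w = (fst w * cos th + snd w * sin th, snd w * cos th - fst w * sin th)"

definition shear_fst :: "real \<Rightarrow> real \<times> real \<Rightarrow> real \<times> real" where
  "shear_fst k p = (fst p + k * snd p, snd p)"

definition shear_snd :: "real \<Rightarrow> real \<times> real \<Rightarrow> real \<times> real" where
  "shear_snd k p = (fst p, snd p + k * fst p)"

lemma norm_rot [simp]: "norm (rot th w) = norm w"
proof -
  have "(fst w * cos th + snd w * sin th)\<^sup>2 + (snd w * cos th - fst w * sin th)\<^sup>2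
        = ((fst w)\<^sup>2 + (snd w)\<^sup>2) * ((sin th)\<^sup>2 + (cos th)\<^sup>2)"
    by (simp only: power2_eq_square) algebra
  thus ?thesis by (cases w) (simp add: rot_def norm_Pair)
qed

lemma rot_rot: "rot a (rot b w) = rot (a + b) w"
  unfolding rot_def by (simp add: cos_add sin_add algebra_simps)

lemma borel_measurable_rot [measurable (raw)]:
  assumes "f \<in> borel_measurable M" and "g \<in> borel_measurable M"
  shows "(\<lambda>x. rot (f x) (g x)) \<in> borel_measurable M"
proof -
  have "(\<lambda>p::real \<times> (real \<times> real). rot (fst p) (snd p)) \<in> borel_measurable (borel \<Otimes>\<^sub>M borel)"
    unfolding borel_prod rot_def by (intro borel_measurable_continuous_onI continuous_intros)
  from measurable_compose[OF measurable_Pair[OF assms] this] show ?thesis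
    by simp
qed

lemma borel_measurable_shear [measurable]:
  "shear_fst k \<in> borel_measurable borel" "shear_snd k \<in> borel_measurable borel"
  unfolding shear_fst_def shear_snd_def
  by (intro borel_measurable_continuous_onI continuous_intros)+

text \<open>Paeth's three-shear decomposition.\<close>
lemma rot_eq_shears:
  assumes "cos (th/2) \<noteq> 0"
  shows "rot th w = shear_fst (tan (th/2)) (shear_snd (- sin th) (shear_fst (tan (th/2)) w))"
proof -
  define u where "u = th/2"
  have th: "th = 2*u" by (simp add: u_def)
  have c: "cos u \<noteq> 0" using assms by (simp add: u_def)
  have s2: "sin th = 2 * sin u * cos u" and c2: "cos th = 1 - 2 * (sin u)^2"
    by (simp_all add: th sin_double cos_double_sin)
  have cc: "cos u * cos u = 1 - sin u * sin u"
    using sin_cos_squared_add[of u] by (simp add: power2_eq_square)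
  show ?thesis
    unfolding rot_def shear_fst_def shear_snd_def prod_eq_iff fst_conv snd_conv u_def[symmetric]
    using c by (simp add: tan_def s2 c2 field_simps power2_eq_square) (use cc in algebra)
qed

lemma nn_integral_lborel_swap:
  fixes h :: "real \<times> real \<Rightarrow> ennreal"
  assumes [measurable]: "h \<in> borel_measurable borel"
  shows "(\<integral>\<^sup>+p. h (snd p, fst p) \<partial>lborel) = (\<integral>\<^sup>+p. h p \<partial>lborel)"
proof -
  have [measurable]: "h \<in> borel_measurable (lborel \<Otimes>\<^sub>M lborel)"
    by (simp add: lborel_prod)
  have "(\<integral>\<^sup>+p. h (snd p, fst p) \<partial>(lborel \<Otimes>\<^sub>M lborel))
      = (\<integral>\<^sup>+x. \<integral>\<^sup>+y. h (y, x) \<partial>lborel \<partial>lborel)"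
    by (subst lborel.nn_integral_fst[symmetric]) simp_all
  also have "\<dots> = (\<integral>\<^sup>+p. h p \<partial>(lborel \<Otimes>\<^sub>M lborel))"
    by (rule lborel_pair.nn_integral_snd) measurable
  finally show ?thesis by (simp only: lborel_prod)
qed

lemma nn_integral_lborel_shear_fst:
  fixes h :: "real \<times> real \<Rightarrow> ennreal"
  assumes [measurable]: "h \<in> borel_measurable borel"
  shows "(\<integral>\<^sup>+p. h (shear_fst k p) \<partial>lborel) = (\<integral>\<^sup>+p. h p \<partial>lborel)"
proof -
  have [measurable]: "h \<in> borel_measurable (lborel \<Otimes>\<^sub>M lborel)"
    by (simp add: lborel_prod)
  have shift: "(\<integral>\<^sup>+x. h (x + k * y, y) \<partial>lborel) = (\<integral>\<^sup>+x. h (x, y) \<partial>lborel)" for y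
    by (subst lborel_distr_plus[of "k * y", symmetric], subst nn_integral_distr)
       (simp_all add: add.commute)
  have "(\<integral>\<^sup>+p. h (shear_fst k p) \<partial>(lborel \<Otimes>\<^sub>M lborel))
      = (\<integral>\<^sup>+y. \<integral>\<^sup>+x. h (x + k * y, y) \<partial>lborel \<partial>lborel)"
    by (subst lborel_pair.nn_integral_snd[symmetric]) (simp_all add: shear_fst_def)
  also have "\<dots> = (\<integral>\<^sup>+p. h p \<partial>(lborel \<Otimes>\<^sub>M lborel))"
    by (simp add: shift lborel_pair.nn_integral_snd)
  finally show ?thesis by (simp only: lborel_prod)
qed

lemma nn_integral_lborel_shear_snd:
  fixes h :: "real \<times> real \<Rightarrow> ennreal"
  assumes h: "h \<in> borel_measurable borel"
  shows "(\<integral>\<^sup>+p. h (shear_snd k p) \<partial>lborel) = (\<integral>\<^sup>+p. h p \<partial>lborel)"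
proof -
  have "(\<lambda>p::real \<times> real. (snd p, fst p)) \<in> borel_measurable borel"
    by (intro borel_measurable_continuous_onI continuous_intros)
  then have h_swap: "(\<lambda>p. h (snd p, fst p)) \<in> borel_measurable borel"
    using h by (rule measurable_compose)
  have "(\<integral>\<^sup>+p. h (shear_snd k p) \<partial>lborel)
      = (\<integral>\<^sup>+p. h (snd (shear_fst k (snd p, fst p)), fst (shear_fst k (snd p, fst p))) \<partial>lborel)"
    by (simp add: shear_fst_def shear_snd_def)
  also have "\<dots> = (\<integral>\<^sup>+p. h (snd (shear_fst k p), fst (shear_fst k p)) \<partial>lborel)"
    by (rule nn_integral_lborel_swap[of "\<lambda>p. h (snd (shear_fst k p), fst (shear_fst k p))"])
       (rule measurable_compose[OF borel_measurable_shear(1) h_swap])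
  also have "\<dots> = (\<integral>\<^sup>+p. h (snd p, fst p) \<partial>lborel)"
    using h_swap by (rule nn_integral_lborel_shear_fst)
  also have "\<dots> = (\<integral>\<^sup>+p. h p \<partial>lborel)"
    using h by (rule nn_integral_lborel_swap)
  finally show ?thesis .
qed

lemma nn_integral_lborel_rot:
  fixes h :: "real \<times> real \<Rightarrow> ennreal"
  assumes [measurable]: "h \<in> borel_measurable borel"
  shows "(\<integral>\<^sup>+w. h (rot th w) \<partial>lborel) = (\<integral>\<^sup>+w. h w \<partial>lborel)"
proof -
  have shears: "(\<integral>\<^sup>+w. g (rot a w) \<partial>lborel) = (\<integral>\<^sup>+w. g w \<partial>lborel)"
    if "cos (a/2) \<noteq> 0" and [measurable]: "g \<in> borel_measurable borel" for a g
    unfolding rot_eq_shears[OF that(1)]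
    by (simp add: nn_integral_lborel_shear_fst[of "\<lambda>q. g (shear_fst _ (shear_snd _ q))"]
        nn_integral_lborel_shear_snd[of "\<lambda>q. g (shear_fst _ q)"] nn_integral_lborel_shear_fst)
  show ?thesis
  proof (cases "cos (th/2) = 0")
    case False
    then show ?thesis by (rule shears) measurable
  next
    case True
    \<comment> \<open>then \<open>th/2\<close> is an odd multiple of \<open>\<pi>/2\<close>, so rotating twice by \<open>th/2\<close> avoids the singular angle\<close>
    have "cos (th/2/2) \<noteq> 0"
      using True cos_double_cos[of "th/2/2"] by auto
    then have "(\<integral>\<^sup>+w. h (rot (th/2) (rot (th/2) w)) \<partial>lborel) = (\<integral>\<^sup>+w. h w \<partial>lborel)"
      by (simp add: shears[of "th/2" "\<lambda>q. h (rot (th/2) q)"] shears[of "th/2" h])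
    then show ?thesis by (simp add: rot_rot)
  qed
qed

lemma nn_integral_radial_weight_ge:
  fixes g \<psi> :: "real \<times> real \<Rightarrow> ennreal"
  assumes [measurable]: "g \<in> borel_measurable borel" "\<psi> \<in> borel_measurable borel"
    and radial: "\<And>th w. \<psi> (rot th w) = \<psi> w"
    and mean: "\<And>w. g 0 \<le> (\<integral>\<^sup>+a\<in>{0..1}. g (rot (2*pi*a) w) \<partial>lborel)"
  shows "g 0 * (\<integral>\<^sup>+w. \<psi> w \<partial>lborel) \<le> (\<integral>\<^sup>+w. \<psi> w * g w \<partial>lborel)"
proof -
  have [measurable]: "(\<lambda>p. g (rot (2*pi*fst p) (snd p))) \<in> borel_measurable (lborel \<Otimes>\<^sub>M lborel)"
    by measurable
  have "(\<integral>\<^sup>+w. \<psi> w * g w \<partial>lborel) = (\<integral>\<^sup>+a\<in>{0..1::real}. (\<integral>\<^sup>+w. \<psi> w * g w \<partial>lborel) \<partial>lborel)"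
    by (simp add: nn_integral_cmult_indicator)
  also have "\<dots> = (\<integral>\<^sup>+a\<in>{0..1}. (\<integral>\<^sup>+w. \<psi> w * g (rot (2*pi*a) w) \<partial>lborel) \<partial>lborel)"
    using nn_integral_lborel_rot[of "\<lambda>w. \<psi> w * g w"] by (simp add: radial)
  also have "\<dots> = (\<integral>\<^sup>+a. \<integral>\<^sup>+w. \<psi> w * g (rot (2*pi*a) w) * indicator {0..1} a \<partial>lborel \<partial>lborel)"
    by (intro nn_integral_cong nn_integral_multc[symmetric]) measurable
  also have "\<dots> = (\<integral>\<^sup>+w. \<integral>\<^sup>+a. \<psi> w * (g (rot (2*pi*a) w) * indicator {0..1} a) \<partial>lborel \<partial>lborel)"
    by (subst lborel_pair.Fubini') (measurable, simp add: mult.assoc)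
  also have "\<dots> = (\<integral>\<^sup>+w. \<psi> w * (\<integral>\<^sup>+a\<in>{0..1}. g (rot (2*pi*a) w) \<partial>lborel) \<partial>lborel)"
    by (intro nn_integral_cong nn_integral_cmult) measurable
  also have "\<dots> \<ge> (\<integral>\<^sup>+w. \<psi> w * g 0 \<partial>lborel)"
    by (intro nn_integral_mono mult_left_mono mean) simp
  finally show ?thesis
    by (simp add: nn_integral_multc mult.commute)
qed

section \<open>The Gaussian over a disc\<close>

lemma nn_integral_FTC_atLeastAtMost:
  fixes f F :: "real \<Rightarrow> real"
  assumes "a \<le> b"
    and "\<And>x. a \<le> x \<Longrightarrow> x \<le> b \<Longrightarrow> (F has_real_derivative f x) (at x within {a..b})"
    and "\<And>x. a \<le> x \<Longrightarrow> x \<le> b \<Longrightarrow> 0 \<le> f x"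
  shows "(\<integral>\<^sup>+x. ennreal (f x) * indicator {a..b} x \<partial>lborel) = ennreal (F b - F a)"
proof (rule nn_integral_has_integral_lebesgue')
  show "(f has_integral F b - F a) {a..b}"
    using assms by (intro fundamental_theorem_of_calculus)
      (auto simp: has_real_derivative_iff_has_vector_derivative[symmetric])
qed (use assms(3) in auto)

lemma emeasure_ball_inter_cball:
  assumes "0 \<le> s" and "s \<le> r"
  shows "emeasure lborel (ball 0 r \<inter> cball (0::real \<times> real) s) = ennreal (pi * s\<^sup>2)"
proof (cases "s = r")
  case True
  then have "ball 0 r \<inter> cball (0::real \<times> real) s = ball 0 r" by auto
  then show ?thesis
    using assms True by (simp add: emeasure_ball unit_ball_vol_2 power2_eq_square)
next
  case False
  then have "ball 0 r \<inter> cball (0::real \<times> real) s = cball 0 s" using assms by auto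
  then show ?thesis
    using assms by (simp add: emeasure_cball unit_ball_vol_2 power2_eq_square)
qed

text \<open>Layer cake: on the disc, \<open>exp (-pi |w|^2/2)\<close> is \<open>exp (-pi r^2/2)\<close> plus the integral of
  \<open>pi s exp (-pi s^2/2)\<close> over \<open>|w| \<le> s \<le> r\<close>; integrating over \<open>w\<close> first leaves a
  one-dimensional integral.\<close>
lemma nn_integral_gaussian_ball:
  assumes r: "0 < r"
  shows "(\<integral>\<^sup>+w. indicator (ball (0::real \<times> real) r) w * ennreal (exp (- pi * (norm w)\<^sup>2 / 2)) \<partial>lborel)
         = ennreal (2 - 2 * exp (- pi * r\<^sup>2 / 2))"
proof -
  have [measurable]: "ball (0::real \<times> real) r \<in> sets borel" by simp
  define m where "m s = pi * s * exp (- pi * s\<^sup>2 / 2)" for s :: real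
  have m_nonneg: "0 \<le> s \<Longrightarrow> 0 \<le> m s" for s by (simp add: m_def)
  have [measurable]: "m \<in> borel_measurable borel" unfolding m_def by measurable
  define I where "I w s = indicator (ball (0::real \<times> real) r) w * (ennreal (m s) * indicator {norm w..r} s)"
    for w :: "real \<times> real" and s
  have [measurable]: "(\<lambda>(w, s). I w s) \<in> borel_measurable (lborel \<Otimes>\<^sub>M lborel)"
  proof -
    have [measurable]: "Measurable.pred (borel \<Otimes>\<^sub>M borel) (\<lambda>p::(real \<times> real) \<times> real. snd p \<in> {norm (fst p)..r})"
      unfolding atLeastAtMost_iff by measurable
    show ?thesis unfolding I_def case_prod_beta by measurable
  qed
  have layer: "indicator (ball (0::real \<times> real) r) w * ennreal (exp (- pi * (norm w)\<^sup>2 / 2))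
     = indicator (ball (0::real \<times> real) r) w * ennreal (exp (- pi * r\<^sup>2 / 2)) + (\<integral>\<^sup>+s. I w s \<partial>lborel)" for w
  proof (cases "w \<in> ball 0 r")
    case True
    then have le: "norm w \<le> r" by simp
    have "(\<integral>\<^sup>+s. ennreal (m s) * indicator {norm w..r} s \<partial>lborel)
        = ennreal (- exp (- pi * r\<^sup>2 / 2) - - exp (- pi * (norm w)\<^sup>2 / 2))"
      by (rule nn_integral_FTC_atLeastAtMost[OF le])
         (auto intro!: derivative_eq_intros simp: m_def power2_eq_square
           dest: order_trans[OF norm_ge_zero])
    moreover have "exp (- pi * r\<^sup>2 / 2) \<le> exp (- pi * (norm w)\<^sup>2 / 2)"
      using le by (simp add: power_mono)
    ultimately show ?thesis
      using True by (simp add: I_def flip: ennreal_plus)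
  qed (simp add: I_def)
  have shell: "(\<integral>\<^sup>+w. I w s \<partial>lborel) = ennreal (pi * s\<^sup>2 * m s) * indicator {0..r} s" for s
  proof -
    have "(\<integral>\<^sup>+w. I w s \<partial>lborel) = (\<integral>\<^sup>+w. ennreal (m s) * indicator {0..r} s * indicator (ball 0 r \<inter> cball (0::real \<times> real) s) w \<partial>lborel)"
      by (intro nn_integral_cong) (auto simp: I_def indicator_def intro: order_trans[OF norm_ge_zero])
    also have "\<dots> = ennreal (m s) * indicator {0..r} s * emeasure lborel (ball 0 r \<inter> cball (0::real \<times> real) s)"
      by (rule nn_integral_cmult_indicator) simp
    also have "\<dots> = ennreal (pi * s\<^sup>2 * m s) * indicator {0..r} s"
      by (cases "0 \<le> s \<and> s \<le> r")
         (auto simp: emeasure_ball_inter_cball m_nonneg ennreal_mult' mult_ac)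
    finally show ?thesis .
  qed
  have "(\<integral>\<^sup>+w. indicator (ball (0::real \<times> real) r) w * ennreal (exp (- pi * (norm w)\<^sup>2 / 2)) \<partial>lborel)
     = (\<integral>\<^sup>+w. indicator (ball (0::real \<times> real) r) w * ennreal (exp (- pi * r\<^sup>2 / 2)) \<partial>lborel)
       + (\<integral>\<^sup>+w. \<integral>\<^sup>+s. I w s \<partial>lborel \<partial>lborel)"
    unfolding layer by (rule nn_integral_add) measurable
  also have "(\<integral>\<^sup>+w. \<integral>\<^sup>+s. I w s \<partial>lborel \<partial>lborel) = (\<integral>\<^sup>+s. ennreal (pi * s\<^sup>2 * m s) * indicator {0..r} s \<partial>lborel)"
    by (subst lborel_pair.Fubini') (simp_all add: shell)
  also have "\<dots> = ennreal (- (pi * r\<^sup>2 + 2) * exp (- pi * r\<^sup>2 / 2) - - (pi * 0\<^sup>2 + 2) * exp (- pi * 0\<^sup>2 / 2))"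
    by (rule nn_integral_FTC_atLeastAtMost)
       (use r in \<open>auto intro!: derivative_eq_intros m_nonneg simp: m_def power2_eq_square algebra_simps\<close>)
  also have "(\<integral>\<^sup>+w. indicator (ball (0::real \<times> real) r) w * ennreal (exp (- pi * r\<^sup>2 / 2)) \<partial>lborel)
     = ennreal (pi * r\<^sup>2 * exp (- pi * r\<^sup>2 / 2))"
    using r by (simp add: nn_integral_multc emeasure_ball unit_ball_vol_2 power2_eq_square ennreal_mult)
  also have "ennreal (pi * r\<^sup>2 * exp (- pi * r\<^sup>2 / 2))
        + ennreal (- (pi * r\<^sup>2 + 2) * exp (- pi * r\<^sup>2 / 2) - - (pi * 0\<^sup>2 + 2) * exp (- pi * 0\<^sup>2 / 2))
      = ennreal (2 - 2 * exp (- pi * r\<^sup>2 / 2))"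
  proof -
    \<comment> \<open>\<open>(1 + y) exp (- y) \<le> 1\<close> with \<open>y = pi r^2/2\<close> keeps the second summand nonnegative\<close>
    have "(1 + pi * r\<^sup>2 / 2) * exp (- (pi * r\<^sup>2 / 2)) \<le> 1"
      using mult_right_mono[OF exp_ge_add_one_self[of "pi * r\<^sup>2 / 2"], of "exp (- (pi * r\<^sup>2 / 2))"]
      by (simp add: exp_minus)
    then show ?thesis
      by (subst ennreal_plus[symmetric]) (auto simp: algebra_simps)
  qed
  finally show ?thesis .
qed

section \<open>Subharmonicity of the short-time Fourier transform\<close>

lemma has_integral_circle_mean:
  fixes h :: "complex \<Rightarrow> complex"
  assumes "h holomorphic_on UNIV"
  shows "((\<lambda>t. h (c * exp (2 * of_real pi * \<i> * of_real t))) has_integral h 0) {0..1}"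
proof (cases "c = 0")
  case True
  then show ?thesis using has_integral_const_real[of "h 0" 0 1] by simp
next
  case False
  define s where "s = norm c"
  define h' where "h' u = h (u * (c / of_real s))" for u
  have s: "0 < s" using False by (simp add: s_def)
  have "(\<lambda>u. u * (c / of_real s)) holomorphic_on UNIV"
    by (intro holomorphic_intros)
  then have "h' holomorphic_on UNIV"
    unfolding h'_def using holomorphic_on_compose_gen[OF _ assms] by (simp add: o_def)
  then have "((\<lambda>u. h' u / (u - 0)) has_contour_integral (2 * of_real pi * \<i> * h' 0)) (circlepath 0 s)"
    by (intro Cauchy_integral_circlepath_simple) (use s in \<open>auto intro: holomorphic_on_subset\<close>)
  moreover have "h' 0 = h 0" by (simp add: h'_def)
  ultimately have "((\<lambda>u. h' u / (u - 0)) has_contour_integral (2 * of_real pi * \<i> * h 0)) (circlepath 0 s)"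
    by (simp only:)
  then have "((\<lambda>t. (2 * of_real pi * \<i>) * h (c * exp (2 * of_real pi * \<i> * of_real t)))
      has_integral (2 * of_real pi * \<i>) * h 0) {0..1}"
    unfolding has_contour_integral_def
  proof (rule has_integral_eq[rotated])
    fix t :: real assume "t \<in> {0..1}"
    then show "h' (circlepath 0 s t) / (circlepath 0 s t - 0) * vector_derivative (circlepath 0 s) (at t within {0..1})
        = (2 * of_real pi * \<i>) * h (c * exp (2 * of_real pi * \<i> * of_real t))"
      using s vector_derivative_circlepath01[of t 0 s]
      by (simp add: circlepath h'_def s_def field_simps)
  qed
  from has_integral_mult_right[OF this, of "inverse (2 * of_real pi * \<i>)"] show ?thesis
    by (simp add: field_simps)
qed

text \<open>For \<open>z = (x, \<omega>)\<close>, \<open>bargmann f x \<omega>\<close> is the Bargmann transform of the time-frequency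
  shift of \<open>f\<close> by \<open>z\<close>; by \<open>norm_stft_add\<close>,
  \<open>|V f (z + w)| = exp (-pi |w|^2/2) |bargmann f x \<omega> (w\<^sub>1 - i w\<^sub>2)|\<close>.\<close>
definition bargmann_kernel :: "real \<Rightarrow> real \<Rightarrow> complex \<Rightarrow> real \<Rightarrow> complex" where
  "bargmann_kernel x \<omega> c t = of_real (gauss (t - x)) * exp (- 2 * of_real pi * \<i> * of_real (\<omega> * t))
      * exp (2 * of_real pi * c * of_real (t - x) - of_real pi * c\<^sup>2 / 2)"

definition bargmann :: "(real \<Rightarrow> complex) \<Rightarrow> real \<Rightarrow> real \<Rightarrow> complex \<Rightarrow> complex" where
  "bargmann f x \<omega> c = (LINT t|lborel. f t * bargmann_kernel x \<omega> c t)"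

lemma holomorphic_bargmann_kernel: "(\<lambda>c. bargmann_kernel x \<omega> c t) holomorphic_on UNIV"
  unfolding bargmann_kernel_def by (intro holomorphic_intros) auto

lemma continuous_on_gauss: "continuous_on A gauss"
  unfolding gauss_def by (intro continuous_intros)

lemma continuous_on_bargmann_kernel:
  "continuous_on UNIV (\<lambda>p::complex \<times> real. bargmann_kernel x \<omega> (fst p) (snd p))"
  unfolding bargmann_kernel_def
  by (intro continuous_intros continuous_on_compose2[OF continuous_on_gauss[of UNIV]]) auto

lemma norm_bargmann_kernel_le:
  "norm (bargmann_kernel x \<omega> c t) \<le> 2 powr (1/4) * exp (3 * pi * (norm c)\<^sup>2 / 2)"
proof -
  have "Re (2 * of_real pi * c * of_real (t - x) - of_real pi * c\<^sup>2 / 2)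
     = 2 * pi * Re c * (t - x) - pi * ((Re c)\<^sup>2 - (Im c)\<^sup>2) / 2"
    by (simp add: power2_eq_square)
  then have "norm (bargmann_kernel x \<omega> c t)
      = 2 powr (1/4) * exp (- pi * (t - x)\<^sup>2 + (2 * pi * Re c * (t - x) - pi * ((Re c)\<^sup>2 - (Im c)\<^sup>2) / 2))"
    by (simp add: bargmann_kernel_def gauss_def norm_mult norm_exp_eq_Re mult.assoc flip: exp_add)
  also have "\<dots> \<le> 2 powr (1/4) * exp (3 * pi * (norm c)\<^sup>2 / 2)"
  proof -
    \<comment> \<open>complete the square in \<open>t - x\<close>\<close>
    have "0 \<le> pi * ((t - x - Re c)\<^sup>2 + (Re c)\<^sup>2 + (Im c)\<^sup>2)" by simp
    then have "- pi * (t - x)\<^sup>2 + (2 * pi * Re c * (t - x) - pi * ((Re c)\<^sup>2 - (Im c)\<^sup>2) / 2)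
        \<le> 3 * pi * (norm c)\<^sup>2 / 2"
      unfolding cmod_power2 by (simp add: power2_eq_square field_simps)
    then show ?thesis by simp
  qed
  finally show ?thesis .
qed

lemma stft_add:
  "stft f ((x, \<omega>) + (a, b))
     = exp (of_real (- pi * (a\<^sup>2 + b\<^sup>2) / 2) + \<i> * of_real (- 2 * pi * b * x - pi * a * b))
       * bargmann f x \<omega> (Complex a (- b))"
proof -
  let ?E = "exp (of_real (- pi * (a\<^sup>2 + b\<^sup>2) / 2) + \<i> * of_real (- 2 * pi * b * x - pi * a * b))"
  have g: "of_real (gauss y) = of_real (2 powr (1/4)) * exp (complex_of_real (- pi * y\<^sup>2))" for y
    by (simp add: gauss_def flip: exp_of_real)
  have integrand: "cnj (complex_of_real (gauss (t - fst ((x, \<omega>) + (a, b)))))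
        * exp (- 2 * pi * \<i> * complex_of_real (snd ((x, \<omega>) + (a, b)) * t))
      = ?E * bargmann_kernel x \<omega> (Complex a (- b)) t" for t
  proof -
    have "?E * bargmann_kernel x \<omega> (Complex a (- b)) t
       = of_real (2 powr (1/4)) * exp ((of_real (- pi * (a\<^sup>2 + b\<^sup>2) / 2) + \<i> * of_real (- 2 * pi * b * x - pi * a * b))
          + of_real (- pi * (t - x)\<^sup>2) + (- 2 * of_real pi * \<i> * of_real (\<omega> * t))
          + (2 * of_real pi * Complex a (- b) * of_real (t - x) - of_real pi * (Complex a (- b))\<^sup>2 / 2))"
      unfolding bargmann_kernel_def g exp_add by (simp add: mult_ac)
    also have "(of_real (- pi * (a\<^sup>2 + b\<^sup>2) / 2) + \<i> * of_real (- 2 * pi * b * x - pi * a * b))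
          + of_real (- pi * (t - x)\<^sup>2) + (- 2 * of_real pi * \<i> * of_real (\<omega> * t))
          + (2 * of_real pi * Complex a (- b) * of_real (t - x) - of_real pi * (Complex a (- b))\<^sup>2 / 2)
        = of_real (- pi * (t - (x + a))\<^sup>2) + (- 2 * of_real pi * \<i> * of_real ((\<omega> + b) * t))"
      by (simp add: complex_eq_iff power2_eq_square field_simps)
    also have "of_real (2 powr (1/4)) * exp (of_real (- pi * (t - (x + a))\<^sup>2) + (- 2 * of_real pi * \<i> * of_real ((\<omega> + b) * t)))
        = cnj (complex_of_real (gauss (t - fst ((x, \<omega>) + (a, b)))))
          * exp (- 2 * pi * \<i> * complex_of_real (snd ((x, \<omega>) + (a, b)) * t))"
      unfolding complex_cnj_complex_of_real fst_add snd_add fst_conv snd_conv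
      unfolding g exp_add by (simp add: mult_ac)
    finally show ?thesis ..
  qed
  have "stft f ((x, \<omega>) + (a, b))
      = (LINT t|lborel. f t * (cnj (complex_of_real (gauss (t - fst ((x, \<omega>) + (a, b)))))
          * exp (- 2 * pi * \<i> * complex_of_real (snd ((x, \<omega>) + (a, b)) * t))))"
    unfolding stft_def by (simp only: mult.assoc)
  also have "\<dots> = (LINT t|lborel. ?E * (f t * bargmann_kernel x \<omega> (Complex a (- b)) t))"
    unfolding integrand by (simp only: mult.left_commute)
  finally show ?thesis
    by (simp add: bargmann_def)
qed

lemma norm_stft_add:
  "norm (stft f (z + w))
     = exp (- pi * (norm w)\<^sup>2 / 2) * norm (bargmann f (fst z) (snd z) (Complex (fst w) (- snd w)))"
proof -
  have "(norm w)\<^sup>2 = (fst w)\<^sup>2 + (snd w)\<^sup>2"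
    by (cases w) (simp add: norm_Pair)
  then show ?thesis
    using stft_add[of f "fst z" "snd z" "fst w" "snd w"] by (simp add: norm_mult norm_exp_eq_Re)
qed

lemma Complex_rot:
  "Complex (fst (rot th w)) (- snd (rot th w)) = Complex (fst w) (- snd w) * exp (\<i> * of_real th)"
  by (simp add: rot_def complex_eq_iff exp_Euler cos_of_real sin_of_real algebra_simps)

lemma borel_measurable_bargmann_kernel [measurable (raw)]:
  assumes "g \<in> borel_measurable M" and "h \<in> borel_measurable M"
  shows "(\<lambda>y. bargmann_kernel x \<omega> (g y) (h y)) \<in> borel_measurable M"
proof -
  have "(\<lambda>p::complex \<times> real. bargmann_kernel x \<omega> (fst p) (snd p)) \<in> borel_measurable (borel \<Otimes>\<^sub>M borel)"
    unfolding borel_prod by (rule borel_measurable_continuous_onI[OF continuous_on_bargmann_kernel])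
  from measurable_compose[OF measurable_Pair[OF assms] this] show ?thesis
    by simp
qed

lemma bargmann_kernel_circle_mean:
  "(LINT a|lborel. indicator {0..1} a *\<^sub>R bargmann_kernel x \<omega> (c * exp (2 * of_real pi * \<i> * of_real a)) t)
     = bargmann_kernel x \<omega> 0 t"
proof -
  have "continuous_on {0..1} (\<lambda>a. bargmann_kernel x \<omega> (c * exp (2 * of_real pi * \<i> * of_real a)) t)"
    by (rule continuous_on_compose2[OF continuous_on_bargmann_kernel, where f = "\<lambda>a. (c * exp (2 * of_real pi * \<i> * of_real a), t)", simplified])
       (auto intro!: continuous_intros)
  then have "set_integrable lborel {0..1} (\<lambda>a. bargmann_kernel x \<omega> (c * exp (2 * of_real pi * \<i> * of_real a)) t)"
    by (rule borel_integrable_atLeastAtMost')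
  then have "(LINT a:{0..1}|lborel. bargmann_kernel x \<omega> (c * exp (2 * of_real pi * \<i> * of_real a)) t)
      = integral {0..1} (\<lambda>a. bargmann_kernel x \<omega> (c * exp (2 * of_real pi * \<i> * of_real a)) t)"
    by (rule set_borel_integral_eq_integral)
  also have "\<dots> = bargmann_kernel x \<omega> 0 t"
    by (rule integral_unique[OF has_integral_circle_mean[OF holomorphic_bargmann_kernel]])
  finally show ?thesis by (simp add: set_lebesgue_integral_def)
qed

lemma integrable_bargmann_circle:
  assumes f: "integrable lborel f"
  shows "integrable (lborel \<Otimes>\<^sub>M lborel) (\<lambda>(a, t). indicator {0..1::real} a *\<^sub>R
           (f t * bargmann_kernel x \<omega> (c * exp (2 * of_real pi * \<i> * of_real a)) t))"
    (is "integrable _ ?\<Phi>")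
proof (rule integrableI_bounded)
  have [measurable]: "f \<in> borel_measurable borel" using f by auto
  show "?\<Phi> \<in> borel_measurable (lborel \<Otimes>\<^sub>M lborel)" by measurable
  define C where "C = 2 powr (1/4) * exp (3 * pi * (norm c)\<^sup>2 / 2)"
  have [measurable]: "(\<lambda>p. ennreal (C * norm (f (snd p))) * indicator {0..1::real} (fst p))
      \<in> borel_measurable (lborel \<Otimes>\<^sub>M lborel)"
    by measurable
  have bound: "ennreal (norm (?\<Phi> p)) \<le> ennreal (C * norm (f (snd p))) * indicator {0..1::real} (fst p)" for p
    using norm_bargmann_kernel_le[of x \<omega> "c * exp (2 * of_real pi * \<i> * of_real (fst p))" "snd p"]
    by (cases p) (auto simp: C_def indicator_def norm_mult mult.commute intro!: ennreal_leI mult_left_mono)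
  have "(\<integral>\<^sup>+p. norm (?\<Phi> p) \<partial>(lborel \<Otimes>\<^sub>M lborel))
      \<le> (\<integral>\<^sup>+p. ennreal (C * norm (f (snd p))) * indicator {0..1::real} (fst p) \<partial>(lborel \<Otimes>\<^sub>M lborel))"
    by (intro nn_integral_mono bound)
  also have "\<dots> = (\<integral>\<^sup>+a. \<integral>\<^sup>+t. ennreal (C * norm (f t)) * indicator {0..1::real} a \<partial>lborel \<partial>lborel)"
    by (subst lborel.nn_integral_fst[symmetric]) auto
  also have "\<dots> = ennreal C * (\<integral>\<^sup>+t. norm (f t) \<partial>lborel)"
    by (simp add: nn_integral_multc nn_integral_cmult ennreal_mult C_def)
  also have "\<dots> < \<infinity>"
    using f by (simp add: integrable_iff_bounded ennreal_mult_less_top)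
  finally show "(\<integral>\<^sup>+p. norm (?\<Phi> p) \<partial>(lborel \<Otimes>\<^sub>M lborel)) < \<infinity>" .
qed

text \<open>By Fubini, the circle means of the entire kernel pass through the integral over \<open>t\<close>.\<close>
lemma norm_bargmann_le_circle_mean:
  assumes f: "integrable lborel f"
  shows "ennreal (norm (bargmann f x \<omega> 0))
    \<le> (\<integral>\<^sup>+a\<in>{0..1}. norm (bargmann f x \<omega> (c * exp (2 * of_real pi * \<i> * of_real a))) \<partial>lborel)"
proof -
  let ?\<Phi> = "\<lambda>a t. indicator {0..1::real} a *\<^sub>R
              (f t * bargmann_kernel x \<omega> (c * exp (2 * of_real pi * \<i> * of_real a)) t)"
  have int: "integrable (lborel \<Otimes>\<^sub>M lborel) (\<lambda>(a, t). ?\<Phi> a t)"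
    using integrable_bargmann_circle[OF f] .
  have "(LINT a|lborel. ?\<Phi> a t) = f t * bargmann_kernel x \<omega> 0 t" for t
  proof -
    have "(LINT a|lborel. ?\<Phi> a t) = (LINT a|lborel. f t * (indicator {0..1::real} a *\<^sub>R
              bargmann_kernel x \<omega> (c * exp (2 * of_real pi * \<i> * of_real a)) t))"
      by simp
    then show ?thesis
      by (simp only: integral_mult_right_zero bargmann_kernel_circle_mean)
  qed
  then have "bargmann f x \<omega> 0 = (LINT t|lborel. LINT a|lborel. ?\<Phi> a t)"
    by (simp add: bargmann_def)
  also have "\<dots> = (LINT a|lborel. LINT t|lborel. ?\<Phi> a t)"
    using lborel_pair.Fubini_integral[OF int] by simp
  also have "\<dots> = (LINT a|lborel. indicator {0..1::real} a *\<^sub>R bargmann f x \<omega> (c * exp (2 * of_real pi * \<i> * of_real a)))"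
    by (simp add: bargmann_def)
  finally have "ennreal (norm (bargmann f x \<omega> 0))
      \<le> (\<integral>\<^sup>+a. norm (indicator {0..1::real} a *\<^sub>R bargmann f x \<omega> (c * exp (2 * of_real pi * \<i> * of_real a))) \<partial>lborel)"
    using integral_norm_bound_ennreal[OF lborel_pair.integrable_fst'[OF int]] by (simp add: bargmann_def)
  also have "\<dots> = (\<integral>\<^sup>+a\<in>{0..1}. norm (bargmann f x \<omega> (c * exp (2 * of_real pi * \<i> * of_real a))) \<partial>lborel)"
    by (intro nn_integral_cong) (simp add: indicator_def)
  finally show ?thesis .
qed

lemma borel_measurable_stft [measurable]:
  assumes [measurable]: "f \<in> borel_measurable borel"
  shows "stft f \<in> borel_measurable borel"
proof -
  have "continuous_on UNIV (\<lambda>p::(real \<times> real) \<times> real. cnj (complex_of_real (gauss (snd p - fst (fst p))))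
      * exp (- 2 * pi * \<i> * complex_of_real (snd (fst p) * snd p)))"
    by (intro continuous_intros continuous_on_compose2[OF continuous_on_gauss[of UNIV]]) auto
  then have [measurable]: "(\<lambda>p::(real \<times> real) \<times> real. cnj (complex_of_real (gauss (snd p - fst (fst p))))
      * exp (- 2 * pi * \<i> * complex_of_real (snd (fst p) * snd p))) \<in> borel_measurable (lborel \<Otimes>\<^sub>M lborel)"
    using borel_measurable_continuous_onI by (simp add: lborel_prod)
  have "(\<lambda>z. LINT t|lborel. f t * (cnj (complex_of_real (gauss (t - fst z)))
      * exp (- 2 * pi * \<i> * complex_of_real (snd z * t)))) \<in> borel_measurable lborel"
    by measurable
  then show ?thesis
    unfolding stft_def by (simp add: mult.assoc)
qed

lemma nn_integral_ball_translate:
  fixes u :: "'a::euclidean_space \<Rightarrow> ennreal"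
  assumes [measurable]: "u \<in> borel_measurable borel"
  shows "(\<integral>\<^sup>+w. indicator (ball 0 r) w * u (z + w) \<partial>lborel) = (\<integral>\<^sup>+w. indicator (ball z r) w * u w \<partial>lborel)"
proof -
  have [measurable]: "ball z r \<in> sets borel" by simp
  have "(\<integral>\<^sup>+w. indicator (ball z r) w * u w \<partial>lborel) = (\<integral>\<^sup>+w. indicator (ball z r) (z + w) * u (z + w) \<partial>lborel)"
    by (subst lborel_distr_plus[of z, symmetric], subst nn_integral_distr) simp_all
  also have "\<dots> = (\<integral>\<^sup>+w. indicator (ball 0 r) w * u (z + w) \<partial>lborel)"
    by (intro nn_integral_cong) (simp add: indicator_def dist_norm)
  finally show ?thesis ..
qed

text \<open>Averaging the subharmonic function \<open>exp (pi |w|^2/2) |V f (z + w)|\<close> against the radial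
  weight \<open>exp (-pi |w|^2/2)\<close> on the disc cancels the Gaussian factor exactly.\<close>
lemma stft_le_ball_average:
  assumes f: "integrable lborel f" and r: "0 < r"
  shows "ennreal (2 - 2 * exp (- pi * r\<^sup>2 / 2)) * norm (stft f z)
         \<le> (\<integral>\<^sup>+w. indicator (ball z r) w * ennreal (norm (stft f w)) \<partial>lborel)"
proof -
  have [measurable]: "f \<in> borel_measurable borel" using f by auto
  define v where "v w = ennreal (norm (bargmann f (fst z) (snd z) (Complex (fst w) (- snd w))))" for w
  define \<psi> where "\<psi> w = indicator (ball (0::real \<times> real) r) w * ennreal (exp (- pi * (norm w)\<^sup>2 / 2))" for w
  have v_eq: "v w = ennreal (exp (pi * (norm w)\<^sup>2 / 2) * norm (stft f (z + w)))" for w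
    by (simp add: v_def norm_stft_add mult.assoc flip: exp_add)
  have [measurable]: "ball (0::real \<times> real) r \<in> sets borel" by simp
  have [measurable]: "(\<lambda>w::real \<times> real. exp (c * (norm w)\<^sup>2 / 2)) \<in> borel_measurable borel" for c
    by (intro borel_measurable_continuous_onI continuous_intros) simp
  have [measurable]: "v \<in> borel_measurable borel" "\<psi> \<in> borel_measurable borel"
    unfolding v_eq[abs_def] \<psi>_def by measurable
  have "v 0 * (\<integral>\<^sup>+w. \<psi> w \<partial>lborel) \<le> (\<integral>\<^sup>+w. \<psi> w * v w \<partial>lborel)"
  proof (rule nn_integral_radial_weight_ge)
    show "\<psi> (rot th w) = \<psi> w" for th w by (simp add: \<psi>_def indicator_def)
    have "Complex 0 0 = 0" by (simp add: complex_eq_iff)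
    then show "v 0 \<le> (\<integral>\<^sup>+a\<in>{0..1}. v (rot (2*pi*a) w) \<partial>lborel)" for w
      using norm_bargmann_le_circle_mean[OF f, of "fst z" "snd z" "Complex (fst w) (- snd w)"]
      by (simp add: v_def Complex_rot zero_prod_def ac_simps)
  qed measurable
  also have "(\<integral>\<^sup>+w. \<psi> w * v w \<partial>lborel) = (\<integral>\<^sup>+w. indicator (ball 0 r) w * ennreal (norm (stft f (z + w))) \<partial>lborel)"
    by (intro nn_integral_cong)
       (auto simp: \<psi>_def v_eq indicator_def exp_minus field_simps simp flip: ennreal_mult)
  also have "\<dots> = (\<integral>\<^sup>+w. indicator (ball z r) w * ennreal (norm (stft f w)) \<partial>lborel)"
    by (rule nn_integral_ball_translate) measurable
  finally show ?thesis
    using nn_integral_gaussian_ball[OF r] by (simp add: v_eq \<psi>_def mult.commute)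
qed

section \<open>The covering argument\<close>

lemma nn_integral_indicator_le_density:
  fixes u :: "'a::euclidean_space \<Rightarrow> ennreal"
  assumes [measurable]: "u \<in> borel_measurable borel" "S \<in> sets borel"
    and mean: "\<And>z. c * u z \<le> (\<integral>\<^sup>+w. indicator (ball z r) w * u w \<partial>lborel)"
    and density: "\<And>w. emeasure lborel (S \<inter> ball w r) \<le> \<rho>"
  shows "c * (\<integral>\<^sup>+z. indicator S z * u z \<partial>lborel) \<le> \<rho> * (\<integral>\<^sup>+z. u z \<partial>lborel)"
proof -
  have [measurable]: "ball z r \<in> sets borel" for z by simp
  have [measurable]: "(\<lambda>p. indicator (ball (fst p) r) (snd p) :: ennreal) \<in> borel_measurable (lborel \<Otimes>\<^sub>M lborel)"
  proof -
    have "(\<lambda>p. indicator (ball (fst p) r) (snd p) :: ennreal) = (\<lambda>p. if dist (fst p) (snd p) < r then 1 else 0)"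
      by (auto simp: indicator_def fun_eq_iff)
    also have "\<dots> \<in> borel_measurable (lborel \<Otimes>\<^sub>M lborel)" by measurable
    finally show ?thesis .
  qed
  have "c * (\<integral>\<^sup>+z. indicator S z * u z \<partial>lborel) = (\<integral>\<^sup>+z. indicator S z * (c * u z) \<partial>lborel)"
    by (simp add: nn_integral_cmult[symmetric] ac_simps)
  also have "\<dots> \<le> (\<integral>\<^sup>+z. indicator S z * (\<integral>\<^sup>+w. indicator (ball z r) w * u w \<partial>lborel) \<partial>lborel)"
    by (intro nn_integral_mono mult_left_mono mean) simp
  also have "\<dots> = (\<integral>\<^sup>+z. \<integral>\<^sup>+w. indicator S z * (indicator (ball z r) w * u w) \<partial>lborel \<partial>lborel)"
    by (intro nn_integral_cong nn_integral_cmult[symmetric]) measurable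
  also have "\<dots> = (\<integral>\<^sup>+w. \<integral>\<^sup>+z. u w * indicator (S \<inter> ball w r) z \<partial>lborel \<partial>lborel)"
    by (subst lborel_pair.Fubini')
       (measurable, auto intro!: nn_integral_cong simp: indicator_def dist_commute)
  also have "\<dots> = (\<integral>\<^sup>+w. u w * emeasure lborel (S \<inter> ball w r) \<partial>lborel)"
    by (intro nn_integral_cong nn_integral_cmult_indicator) simp
  also have "\<dots> \<le> (\<integral>\<^sup>+w. u w * \<rho> \<partial>lborel)"
    by (intro nn_integral_mono mult_left_mono density) simp
  also have "\<dots> = \<rho> * (\<integral>\<^sup>+z. u z \<partial>lborel)"
    by (subst nn_integral_multc) (measurable, simp add: mult.commute)
  finally show ?thesis .
qed

lemma nn_integral_lebesgue_indicator_le_density: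
  fixes u :: "'a::euclidean_space \<Rightarrow> ennreal"
  assumes [measurable]: "u \<in> borel_measurable borel" and \<Delta>: "\<Delta> \<in> sets lebesgue"
    and mean: "\<And>z. c * u z \<le> (\<integral>\<^sup>+w. indicator (ball z r) w * u w \<partial>lborel)"
    and density: "\<And>w. emeasure lebesgue (\<Delta> \<inter> ball w r) \<le> \<rho>"
  shows "c * (\<integral>\<^sup>+z. indicator \<Delta> z * u z \<partial>lebesgue) \<le> \<rho> * (\<integral>\<^sup>+z. u z \<partial>lborel)"
proof -
  obtain S N N' where \<Delta>_eq: "\<Delta> = S \<union> N" and "N \<subseteq> N'" "N' \<in> null_sets lborel"
    and [measurable]: "S \<in> sets borel"
    using \<Delta> by (auto elim!: sets_completionE)
  have "AE z in lebesgue. z \<notin> N'"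
    using \<open>N' \<in> null_sets lborel\<close> by (intro AE_completion AE_not_in)
  then have "(\<integral>\<^sup>+z. indicator \<Delta> z * u z \<partial>lebesgue) = (\<integral>\<^sup>+z. indicator S z * u z \<partial>lebesgue)"
    by (intro nn_integral_cong_AE, eventually_elim)
       (use \<open>N \<subseteq> N'\<close> in \<open>auto simp: \<Delta>_eq indicator_def\<close>)
  also have "\<dots> = (\<integral>\<^sup>+z. indicator S z * u z \<partial>lborel)"
    by (rule nn_integral_completion) measurable
  also have "c * \<dots> \<le> \<rho> * (\<integral>\<^sup>+z. u z \<partial>lborel)"
  proof (rule nn_integral_indicator_le_density[OF _ _ mean])
    show "emeasure lborel (S \<inter> ball w r) \<le> \<rho>" for w
    proof -
      have "emeasure lborel (S \<inter> ball w r) = emeasure lebesgue (S \<inter> ball w r)"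
        by (simp add: emeasure_completion)
      also have "\<dots> \<le> emeasure lebesgue (\<Delta> \<inter> ball w r)"
        using \<Delta> by (intro emeasure_mono) (auto simp: \<Delta>_eq)
      finally show ?thesis using density order_trans by blast
    qed
  qed measurable
  finally show ?thesis by (simp add: mult_left_mono)
qed

lemma measure_le_nyquist_density:
  assumes \<Delta>: "\<Delta> \<in> sets lebesgue" and R: "0 < R"
  shows "measure lebesgue (\<Delta> \<inter> ball z (1 / R)) \<le> nyquist_density \<Delta> R"
proof -
  have "measure lebesgue (\<Delta> \<inter> ball w (1 / R)) \<le> measure lebesgue (ball w (1 / R))" for w
    using \<Delta> by (intro measure_mono_fmeasurable) auto
  also have "measure lebesgue (ball w (1 / R)) = measure lborel (ball (0::real \<times> real) (1 / R))"
    for w :: "real \<times> real"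
    using R by (simp add: measure_completion content_ball)
  finally have "bdd_above (range (\<lambda>w. measure lebesgue (\<Delta> \<inter> ball w (1 / R))))"
    by (intro bdd_aboveI2)
  then show ?thesis
    unfolding nyquist_density_def by (rule cSUP_upper[OF UNIV_I])
qed

lemma nyquist_density_nonneg:
  "\<Delta> \<in> sets lebesgue \<Longrightarrow> 0 < R \<Longrightarrow> 0 \<le> nyquist_density \<Delta> R"
  using measure_le_nyquist_density[of \<Delta> R 0] measure_nonneg order_trans by blast

lemma emeasure_le_nyquist_density:
  assumes \<Delta>: "\<Delta> \<in> sets lebesgue" and R: "0 < R"
  shows "emeasure lebesgue (\<Delta> \<inter> ball z (1 / R)) \<le> ennreal (nyquist_density \<Delta> R)"
proof -
  have "\<Delta> \<inter> ball z (1 / R) \<in> fmeasurable lebesgue"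
    using fmeasurable_Int_fmeasurable[OF lmeasurable_ball \<Delta>] by (simp add: Int_commute)
  then show ?thesis
    using measure_le_nyquist_density[OF assms] by (simp add: emeasure_eq_measure2 ennreal_leI)
qed

lemma L1norm_eq_nn_integral:
  assumes "F \<in> borel_measurable lebesgue"
  shows "L1norm F = enn2real (\<integral>\<^sup>+z. norm (F z) \<partial>lebesgue)"
  unfolding L1norm_def using assms by (simp add: integral_eq_nn_integral)

lemma enn2real_le_of_mult_le:
  assumes le: "ennreal d * X \<le> ennreal \<rho> * Y" and Y: "Y < \<infinity>" and d: "0 < d" and \<rho>: "0 \<le> \<rho>"
  shows "enn2real X \<le> \<rho> / d * enn2real Y"
proof -
  have "ennreal \<rho> * Y < \<infinity>"
    using Y by (simp add: ennreal_mult_less_top)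
  with le have "ennreal d * X < \<infinity>"
    by (rule le_less_trans)
  with d have "X < \<infinity>"
    by (auto simp: ennreal_mult_less_top)
  then obtain x where X: "X = ennreal x" "0 \<le> x"
    by (cases X) auto
  obtain y where Y: "Y = ennreal y" "0 \<le> y"
    using Y by (cases Y) auto
  have "d * x \<le> \<rho> * y"
    using le d \<rho> by (simp add: X Y ennreal_le_iff flip: ennreal_mult)
  with d X Y show ?thesis
    by (simp add: field_simps)
qed

lemma one_minus_exp_double_le: "1 - exp (- (2 * x)) \<le> 2 - 2 * exp (- x)" for x :: real
proof -
  have "exp (- (2 * x)) = exp (- x) * exp (- x)"
    by (simp flip: exp_add)
  moreover have "0 \<le> (1 - exp (- x))\<^sup>2" by simp
  ultimately show ?thesis by (simp add: power2_eq_square algebra_simps)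
qed

lemma L1norm_proj_eq_nn_integral:
  assumes "\<Delta> \<in> sets lebesgue" and "F \<in> borel_measurable lebesgue"
  shows "L1norm (proj \<Delta> F) = enn2real (\<integral>\<^sup>+z. indicator \<Delta> z * ennreal (norm (F z)) \<partial>lebesgue)"
proof -
  have "proj \<Delta> F \<in> borel_measurable lebesgue"
    unfolding proj_def using assms by (intro borel_measurable_times borel_measurable_indicator)
  moreover have "(\<integral>\<^sup>+z. norm (proj \<Delta> F z) \<partial>lebesgue) = (\<integral>\<^sup>+z. indicator \<Delta> z * ennreal (norm (F z)) \<partial>lebesgue)"
    by (intro nn_integral_cong) (simp add: proj_def indicator_def)
  ultimately show ?thesis
    by (simp add: L1norm_eq_nn_integral)
qed

theorem theorem1:
  fixes \<Delta> :: "(real \<times> real) set" and f :: "real \<Rightarrow> complex" and R :: real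
  assumes "\<Delta> \<in> sets lebesgue" and "f \<in> M1" and "0 < R"
  shows "L1norm (proj \<Delta> (stft f))
           \<le> nyquist_density \<Delta> R / (1 - exp (- pi / R\<^sup>2)) * L1norm (stft f)"
proof -
  have f: "integrable lborel f" and F: "integrable lebesgue (stft f)"
    using assms(2) by (auto simp: M1_def)
  then have [measurable]: "stft f \<in> borel_measurable borel"
    by (intro borel_measurable_stft) auto
  have "1 - exp (- pi / R\<^sup>2) \<le> 2 - 2 * exp (- pi * (1 / R)\<^sup>2 / 2)"
    using one_minus_exp_double_le[of "pi * (1 / R)\<^sup>2 / 2"] by (simp add: power2_eq_square)
  then have mean: "ennreal (1 - exp (- pi / R\<^sup>2)) * norm (stft f z)
      \<le> (\<integral>\<^sup>+w. indicator (ball z (1 / R)) w * ennreal (norm (stft f w)) \<partial>lborel)" for z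
    using assms(3) by (intro order_trans[OF mult_right_mono[OF ennreal_leI] stft_le_ball_average[OF f]]) simp_all
  have "ennreal (1 - exp (- pi / R\<^sup>2)) * (\<integral>\<^sup>+z. indicator \<Delta> z * ennreal (norm (stft f z)) \<partial>lebesgue)
      \<le> ennreal (nyquist_density \<Delta> R) * (\<integral>\<^sup>+z. ennreal (norm (stft f z)) \<partial>lborel)"
    by (rule nn_integral_lebesgue_indicator_le_density[OF _ assms(1) mean
        emeasure_le_nyquist_density[OF assms(1,3)]]) measurable
  also have "(\<integral>\<^sup>+z. ennreal (norm (stft f z)) \<partial>lborel) = (\<integral>\<^sup>+z. norm (stft f z) \<partial>lebesgue)"
    by (rule nn_integral_completion[symmetric]) measurable
  finally have "enn2real (\<integral>\<^sup>+z. indicator \<Delta> z * ennreal (norm (stft f z)) \<partial>lebesgue)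
      \<le> nyquist_density \<Delta> R / (1 - exp (- pi / R\<^sup>2)) * enn2real (\<integral>\<^sup>+z. norm (stft f z) \<partial>lebesgue)"
    using F assms(3) nyquist_density_nonneg[OF assms(1,3)]
    by (intro enn2real_le_of_mult_le) (simp_all add: integrable_iff_bounded)
  then show ?thesis
    using F by (simp add: L1norm_proj_eq_nn_integral[OF assms(1)] L1norm_eq_nn_integral)
qed

end
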